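(* Martin's axiom for the partial ordering $\mathrm{Fn}(\omega_1,2)$ implies ${\mathrm{stick}}={\mathrm{stick}}'=2^{\aleph_0}$. Further, if $\mathrm{MA}(\mathit{Cohen})$ holds, then also ${\mathrm{stick}}''=2^{\aleph_0}$.
   Context: $\mathrm{Fn}(\kappa,2)$ is the set of functions from a finite subset of $\kappa$ to $2$ ordered by reverse inclusion. Martin's axiom for a partial ordering $P$: for every family of fewer than $2^{\aleph_0}$ dense subsets of $P$ there is a filter on $P$ meeting all of them. $\mathrm{MA}(\mathit{Cohen})$ is Martin's axiom for all partial orderings of the form $\mathrm{Fn}(\kappa,2)$. ${\mathrm{stick}}$ is the least cardinality of $X\subseteq[\omega_1]^{\aleph_0}$ such that every $y\in[\omega_1]^{\aleph_1}$ has a subset in $X$. ${\mathrm{stick}}'$ (resp. ${\mathrm{stick}}''$) is the least cardinal $\kappa\geq\aleph_1$ for which there is $X\subseteq[\kappa]^{\aleph_0}$ with $|X|=\kappa$ such that every $y\in[\kappa]^{\aleph_1}$ (resp. every $y\in[\kappa]^{\kappa}$) has a subset in $X$. *)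

theory Defs
  imports Main
begin

abbreviation continuum :: "nat set rel" where
  "continuum \<equiv> card_of (UNIV :: nat set set)"

abbreviation aleph1 where "aleph1 \<equiv> cardSuc natLeq"

text \<open>Generic forcing notions: a carrier P and an order le (le q p means q extends p).\<close>

definition dense_in :: "'p set \<Rightarrow> ('p \<Rightarrow> 'p \<Rightarrow> bool) \<Rightarrow> 'p set \<Rightarrow> bool" where
  "dense_in P le D \<longleftrightarrow> D \<subseteq> P \<and> (\<forall>p\<in>P. \<exists>q\<in>D. le q p)"

definition filter_in :: "'p set \<Rightarrow> ('p \<Rightarrow> 'p \<Rightarrow> bool) \<Rightarrow> 'p set \<Rightarrow> bool" where
  "filter_in P le G \<longleftrightarrow> G \<subseteq> P \<and> G \<noteq> {}
     \<and> (\<forall>p\<in>G. \<forall>q\<in>P. le p q \<longrightarrow> q \<in> G)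
     \<and> (\<forall>p\<in>G. \<forall>q\<in>G. \<exists>r\<in>G. le r p \<and> le r q)"

definition MA_for :: "'p set \<Rightarrow> ('p \<Rightarrow> 'p \<Rightarrow> bool) \<Rightarrow> bool" where
  "MA_for P le \<longleftrightarrow>
     (\<forall>\<D> :: 'p set set. (card_of \<D>, continuum) \<in> ordLess \<and> (\<forall>D\<in>\<D>. dense_in P le D)
        \<longrightarrow> (\<exists>G. filter_in P le G \<and> (\<forall>D\<in>\<D>. G \<inter> D \<noteq> {})))"

definition Fn :: "'a set \<Rightarrow> ('a \<rightharpoonup> bool) set" where
  "Fn K = {p. finite (dom p) \<and> dom p \<subseteq> K}"

definition Fn_le :: "('a \<rightharpoonup> bool) \<Rightarrow> ('a \<rightharpoonup> bool) \<Rightarrow> bool" where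
  "Fn_le p q \<longleftrightarrow> q \<subseteq>\<^sub>m p"

definition ctbl_subsets :: "'a set \<Rightarrow> 'a set set" where
  "ctbl_subsets K = {x. x \<subseteq> K \<and> (card_of x, natLeq) \<in> ordIso}"

text \<open>X witnesses stick for W (a set of size aleph_1 playing the role of omega_1).\<close>

definition stick_family :: "'a set \<Rightarrow> 'a set set \<Rightarrow> bool" where
  "stick_family W X \<longleftrightarrow> X \<subseteq> ctbl_subsets W \<and>
     (\<forall>y. y \<subseteq> W \<and> (card_of y, aleph1) \<in> ordIso \<longrightarrow> (\<exists>x\<in>X. x \<subseteq> y))"

definition stick'_prop :: "'a set \<Rightarrow> bool" where
  "stick'_prop K \<longleftrightarrow> (aleph1, card_of K) \<in> ordLeq \<and>
     (\<exists>X. X \<subseteq> ctbl_subsets K \<and> (card_of X, card_of K) \<in> ordIso \<and>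
       (\<forall>y. y \<subseteq> K \<and> (card_of y, aleph1) \<in> ordIso \<longrightarrow> (\<exists>x\<in>X. x \<subseteq> y)))"

definition stick''_prop :: "'a set \<Rightarrow> bool" where
  "stick''_prop K \<longleftrightarrow> (aleph1, card_of K) \<in> ordLeq \<and>
     (\<exists>X. X \<subseteq> ctbl_subsets K \<and> (card_of X, card_of K) \<in> ordIso \<and>
       (\<forall>y. y \<subseteq> K \<and> (card_of y, card_of K) \<in> ordIso \<longrightarrow> (\<exists>x\<in>X. x \<subseteq> y)))"

end

theory Submission
  imports Defs "HOL-Library.Countable_Set_Type" "HOL-Library.Disjoint_Sets"
begin

text \<open>Suppose MA holds for Fn(W,2) with W of size aleph1 and X is a family of fewer than
  continuum countably infinite sets. Let y be the set of points where a sufficiently generic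
  function from W to 2 takes the value True. Split W into aleph1 disjoint countable blocks. By
  density, y meets every block, so it has size aleph1; also every x in X contains a point
  outside y. So X does not catch every subset of size aleph1, which gives the lower bounds
  stick, stick' \<ge> 2^aleph0. Running the same argument in Fn(kappa,2) for kappa below the
  continuum gives stick'' \<ge> 2^aleph0. If aleph1 = 2^aleph0, X is countable, and one point
  removed from each x already works. The upper bounds come from |[2^aleph0]^aleph0| =
  (2^aleph0)^aleph0 = 2^aleph0.\<close>

unbundle cardinal_syntax

lemma natLeq_ordLess_continuum: "natLeq <o continuum"
  using ordIso_ordLess_trans[OF ordIso_symmetric[OF card_of_nat] card_of_Pow[of UNIV]]
  by simp

lemma aleph1_ordLeq_continuum: "aleph1 \<le>o continuum"
  by (rule cardSuc_least[OF natLeq_Card_order card_of_Card_order natLeq_ordLess_continuum])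

lemma infinite_if_aleph1_ordLeq:
  assumes "aleph1 \<le>o |A|"
  shows "infinite A"
proof -
  have "natLeq \<le>o |A|"
    using ordLeq_transitive[OF ordLess_imp_ordLeq[OF cardSuc_greater[OF natLeq_Card_order]] assms] .
  then show ?thesis
    using infinite_iff_natLeq_ordLeq by blast
qed

lemma continuum_ordIso_cexp: "continuum =o ctwo ^c natLeq"
  using card_of_Pow_Func[of "UNIV :: nat set"]
  by (simp add: cexp_def ctwo_def Field_natLeq Field_card_of)

lemma ctbl_subsets_iff: "x \<in> ctbl_subsets A \<longleftrightarrow> x \<subseteq> A \<and> countable x \<and> infinite x"
  unfolding ctbl_subsets_def countable_card_le_natLeq ordIso_iff_ordLeq
  using infinite_iff_natLeq_ordLeq[of x] by blast

lemma infinite_contains_ctbl_subset: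
  assumes "infinite y" "y \<subseteq> K"
  shows "\<exists>x\<in>ctbl_subsets K. x \<subseteq> y"
proof -
  obtain f :: "nat \<Rightarrow> _" where "inj f" "range f \<subseteq> y"
    using infinite_countable_subset[OF assms(1)] by blast
  then have "range f \<in> ctbl_subsets K"
    using assms(2) by (auto simp: ctbl_subsets_iff range_inj_infinite)
  then show ?thesis
    using \<open>range f \<subseteq> y\<close> by blast
qed

lemma continuum_cexp_natLeq_ordIso: "continuum ^c natLeq =o continuum"
proof -
  have "continuum ^c natLeq =o (ctwo ^c natLeq) ^c natLeq"
    using continuum_ordIso_cexp by (rule cexp_cong1[OF _ natLeq_Card_order])
  moreover have "(ctwo ^c natLeq) ^c natLeq =o ctwo ^c natLeq"
    by (rule cexp_cprod_ordLeq[OF Card_order_ctwo natLeq_Cinfinite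
          Cinfinite_Cnotzero[OF natLeq_Cinfinite] ordLeq_refl[OF natLeq_Card_order]])
  ultimately show ?thesis
    using ordIso_transitive ordIso_symmetric[OF continuum_ordIso_cexp] by metis
qed

lemma card_of_ctbl_subsets_ordLeq_continuum:
  assumes "|A| \<le>o continuum"
  shows "|ctbl_subsets A| \<le>o continuum"
proof -
  have "|ctbl_subsets A| \<le>o |{x. x \<subseteq> A \<and> countable x \<and> x \<noteq> {}}|"
    by (rule card_of_mono1) (auto simp: ctbl_subsets_iff)
  also have "|{x. x \<subseteq> A \<and> countable x \<and> x \<noteq> {}}| \<le>o |A| ^c natLeq"
    by (rule card_of_countable_sets_Func)
  finally have "|ctbl_subsets A| \<le>o |A| ^c natLeq" .
  moreover have "|A| ^c natLeq \<le>o continuum ^c natLeq"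
    using assms by (rule cexp_mono1[OF _ natLeq_Card_order])
  ultimately show ?thesis
    using ordLeq_ordIso_trans[OF ordLeq_transitive continuum_cexp_natLeq_ordIso] by metis
qed

lemma infinite_disjoint_ctbl_family:
  assumes "infinite A"
  obtains F where "\<forall>a\<in>A. F a \<in> ctbl_subsets A" "disjoint_family_on F A"
proof -
  have "|UNIV :: nat set| \<le>o |A|"
    using assms by (simp only: infinite_iff_card_of_nat)
  then have "|A \<times> (UNIV :: nat set)| \<le>o |A|"
    using card_of_Times_infinite[OF assms] ordIso_imp_ordLeq by blast
  then obtain h where h: "inj_on h (A \<times> (UNIV :: nat set))" "h ` (A \<times> UNIV) \<subseteq> A"
    unfolding card_of_ordLeq[symmetric] by blast
  define F where "F a = range (\<lambda>n. h (a, n))" for a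
  have "F a \<in> ctbl_subsets A" if "a \<in> A" for a
  proof -
    have "inj (\<lambda>n. h (a, n))"
      using h(1) that by (auto simp: inj_on_def)
    then have "infinite (F a)"
      unfolding F_def by (rule range_inj_infinite)
    then show ?thesis
      using h(2) that by (auto simp: ctbl_subsets_iff F_def)
  qed
  moreover have "disjoint_family_on F A"
    using h(1) unfolding disjoint_family_on_def F_def by (auto dest: inj_onD)
  ultimately show ?thesis
    using that by blast
qed

lemma card_of_ordLeq_ctbl_subsets:
  assumes "infinite A"
  shows "|A| \<le>o |ctbl_subsets A|"
proof -
  obtain F where F: "\<forall>a\<in>A. F a \<in> ctbl_subsets A" "disjoint_family_on F A"
    using infinite_disjoint_ctbl_family[OF assms] .
  have "inj_on F A"
  proof (rule inj_onI)
    fix a a' assume "a \<in> A" "a' \<in> A" "F a = F a'"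
    moreover have "F a \<noteq> {}"
      using F(1) \<open>a \<in> A\<close> by (auto simp: ctbl_subsets_iff)
    ultimately show "a = a'"
      using F(2) unfolding disjoint_family_on_def by force
  qed
  then show ?thesis
    using F(1) unfolding card_of_ordLeq[symmetric] by blast
qed

lemma card_of_ordIso_ctbl_subsets_Pow_nat: "|ctbl_subsets (UNIV :: nat set set)| =o continuum"
  using card_of_ctbl_subsets_ordLeq_continuum[OF ordLeq_refl[OF card_of_Card_order]]
    card_of_ordLeq_ctbl_subsets[OF infinite_if_aleph1_ordLeq[OF aleph1_ordLeq_continuum]]
  by (simp add: ordIso_iff_ordLeq)

lemma card_of_ordLeq_if_meets_disjoint_family:
  assumes "disjoint_family_on F A" "\<forall>a\<in>A. F a \<inter> Y \<noteq> {}"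
  shows "|A| \<le>o |Y|"
proof -
  obtain pick where pick: "\<forall>a\<in>A. pick a \<in> F a \<inter> Y"
    using bchoice[of A "\<lambda>a y. y \<in> F a \<inter> Y"] assms(2) by blast
  have "inj_on pick A"
  proof (rule inj_onI)
    fix a a' assume "a \<in> A" "a' \<in> A" "pick a = pick a'"
    then have "pick a \<in> F a \<inter> F a'"
      using pick by auto
    then show "a = a'"
      using disjoint_family_onD[OF assms(1) \<open>a \<in> A\<close> \<open>a' \<in> A\<close>] by blast
  qed
  then show ?thesis
    using pick unfolding card_of_ordLeq[symmetric] by blast
qed

lemma avoiding_subset_of_small_family:
  assumes "infinite V" and X: "|X| <o |V|" and "\<forall>x\<in>X. x \<noteq> {}"
  shows "\<exists>y\<subseteq>V. |y| =o |V| \<and> (\<forall>x\<in>X. \<not> x \<subseteq> y)"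
proof -
  obtain pick where pick: "\<forall>x\<in>X. pick x \<in> x"
    using bchoice[of X "\<lambda>x y. y \<in> x"] assms(3) by blast
  have small: "|pick ` X| <o |V|"
    using ordLeq_ordLess_trans[OF card_of_image X] .
  have "|V| \<le>o |V - pick ` X|"
  proof (rule ccontr)
    assume "\<not> |V| \<le>o |V - pick ` X|"
    then have "|V - pick ` X| <o |V|"
      by (simp add: not_ordLeq_iff_ordLess[OF card_of_Well_order card_of_Well_order])
    then have "|(V - pick ` X) \<union> pick ` X| <o |V|"
      by (rule card_of_Un_ordLess_infinite[OF assms(1) _ small])
    moreover have "|V| \<le>o |(V - pick ` X) \<union> pick ` X|"
      by (rule card_of_mono1) blast
    ultimately show False
      using not_ordLess_ordLeq by blast
  qed
  then have "|V - pick ` X| =o |V|"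
    unfolding ordIso_iff_ordLeq using card_of_mono1[OF Diff_subset] by blast
  moreover have "\<forall>x\<in>X. \<not> x \<subseteq> V - pick ` X"
    using pick by blast
  ultimately show ?thesis
    by blast
qed

lemma dense_Fn_takes_value_on:
  assumes "infinite B" "B \<subseteq> W"
  shows "dense_in (Fn W) Fn_le {p \<in> Fn W. \<exists>b\<in>B. p b = Some v}"
  unfolding dense_in_def
proof (intro conjI ballI)
  fix p assume p: "p \<in> Fn W"
  then have "infinite (B - dom p)"
    using assms(1) Diff_infinite_finite unfolding Fn_def by blast
  then obtain b where "b \<in> B" "b \<notin> dom p"
    using infinite_imp_nonempty by blast
  then have "p(b \<mapsto> v) \<in> Fn W" "Fn_le (p(b \<mapsto> v)) p"
    using p assms(2) unfolding Fn_def Fn_le_def map_le_def by auto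
  then show "\<exists>q\<in>{p \<in> Fn W. \<exists>b\<in>B. p b = Some v}. Fn_le q p"
    using \<open>b \<in> B\<close> by force
qed auto

lemma filter_in_Fn_consistent:
  assumes "filter_in P Fn_le G" "p \<in> G" "q \<in> G" "p b = Some u" "q b = Some v"
  shows "u = v"
proof -
  obtain r where "Fn_le r p" "Fn_le r q"
    using assms(1-3) unfolding filter_in_def by blast
  then have "r b = Some u" "r b = Some v"
    using assms(4,5) unfolding Fn_le_def map_le_def by (auto simp: dom_def)
  then show ?thesis
    by simp
qed

lemma MA_Fn_splitting_subset:
  fixes \<B> \<C> :: "'a set set"
  assumes MA: "MA_for (Fn W) Fn_le"
    and "|\<B>| <o continuum" "|\<C>| <o continuum"
    and sets: "\<forall>B\<in>\<B> \<union> \<C>. infinite B \<and> B \<subseteq> W"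
  shows "\<exists>y\<subseteq>W. (\<forall>B\<in>\<B>. B \<inter> y \<noteq> {}) \<and> (\<forall>C\<in>\<C>. \<not> C \<subseteq> y)"
proof -
  define hits where "hits v B = {p \<in> Fn W. \<exists>b\<in>B. p b = Some v}" for v B
  define \<D> where "\<D> = hits True ` \<B> \<union> hits False ` \<C>"
  have small: "|\<D>| <o continuum"
    unfolding \<D>_def using assms(2,3)
    by (intro card_of_Un_ordLess_infinite[OF infinite_if_aleph1_ordLeq[OF aleph1_ordLeq_continuum]]
        ordLeq_ordLess_trans[OF card_of_image])
  have dense: "\<forall>D\<in>\<D>. dense_in (Fn W) Fn_le D"
  proof
    fix D assume "D \<in> \<D>"
    then obtain v B where "B \<in> \<B> \<union> \<C>" "D = hits v B"
      unfolding \<D>_def by blast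
    then show "dense_in (Fn W) Fn_le D"
      using sets dense_Fn_takes_value_on[of B W v] by (simp add: hits_def)
  qed
  obtain G where G: "filter_in (Fn W) Fn_le G" and meets: "\<forall>D\<in>\<D>. G \<inter> D \<noteq> {}"
    using MA[unfolded MA_for_def, THEN spec, THEN mp, OF conjI[OF small dense]] by blast
  define y where "y = {b \<in> W. \<exists>p\<in>G. p b = Some True}"
  have "B \<inter> y \<noteq> {}" if "B \<in> \<B>" for B
  proof -
    have "hits True B \<in> \<D>"
      using that unfolding \<D>_def by blast
    then obtain p where "p \<in> G" "p \<in> hits True B"
      using meets by blast
    then obtain b where "p \<in> G" "b \<in> B" "p b = Some True"
      unfolding hits_def by blast
    moreover have "B \<subseteq> W"
      using that sets by blast
    ultimately show ?thesis
      unfolding y_def by blast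
  qed
  moreover have "\<not> C \<subseteq> y" if "C \<in> \<C>" for C
  proof
    assume "C \<subseteq> y"
    have "hits False C \<in> \<D>"
      using that unfolding \<D>_def by blast
    then obtain p where "p \<in> G" "p \<in> hits False C"
      using meets by blast
    then obtain b where p: "p \<in> G" "b \<in> C" "p b = Some False"
      unfolding hits_def by blast
    moreover obtain q where q: "q \<in> G" "q b = Some True"
      using \<open>C \<subseteq> y\<close> \<open>b \<in> C\<close> unfolding y_def by blast
    have "False = True"
      by (rule filter_in_Fn_consistent[OF G p(1) q(1) p(3) q(2)])
    then show False
      by simp
  qed
  moreover have "y \<subseteq> W"
    unfolding y_def by blast
  ultimately show ?thesis
    by blast
qed

lemma MA_Fn_large_avoiding_subset:
  assumes MA: "MA_for (Fn W) Fn_le" and W: "infinite W" "|W| <o continuum"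
    and X: "|X| <o continuum" "\<forall>x\<in>X. infinite x \<and> x \<subseteq> W"
  shows "\<exists>y\<subseteq>W. |y| =o |W| \<and> (\<forall>x\<in>X. \<not> x \<subseteq> y)"
proof -
  obtain F where F: "\<forall>a\<in>W. F a \<in> ctbl_subsets W" "disjoint_family_on F W"
    using infinite_disjoint_ctbl_family[OF W(1)] .
  have "\<forall>B\<in>F ` W \<union> X. infinite B \<and> B \<subseteq> W"
    using F(1) X(2) by (auto simp: ctbl_subsets_iff)
  then have "\<exists>y\<subseteq>W. (\<forall>B\<in>F ` W. B \<inter> y \<noteq> {}) \<and> (\<forall>x\<in>X. \<not> x \<subseteq> y)"
    by (rule MA_Fn_splitting_subset[OF MA ordLeq_ordLess_trans[OF card_of_image W(2)] X(1)])
  then obtain y where y: "y \<subseteq> W" "\<forall>a\<in>W. F a \<inter> y \<noteq> {}" "\<forall>x\<in>X. \<not> x \<subseteq> y"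
    by auto
  have "|y| =o |W|"
    unfolding ordIso_iff_ordLeq
    using card_of_mono1[OF y(1)] card_of_ordLeq_if_meets_disjoint_family[OF F(2) y(2)] by blast
  then show ?thesis
    using y(1,3) by blast
qed

lemma MA_Fn_avoiding_subset:
  fixes W :: "'w set" and f :: "'w \<Rightarrow> 'a" and X :: "'a set set"
  assumes MA: "MA_for (Fn W) Fn_le" and W: "infinite W" "|W| <o continuum"
    and f: "inj_on f W" and X: "|X| <o continuum" "\<forall>x\<in>X. infinite x"
  shows "\<exists>y\<subseteq>f ` W. |y| =o |W| \<and> (\<forall>x\<in>X. \<not> x \<subseteq> y)"
proof -
  define preimage where "preimage x = f -` x \<inter> W" for x
  define X' where "X' = preimage ` {x \<in> X. x \<subseteq> f ` W}"
  have "{x \<in> X. x \<subseteq> f ` W} \<subseteq> X"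
    by blast
  then have small: "|X'| <o continuum"
    unfolding X'_def
    by (rule ordLeq_ordLess_trans[OF card_of_image ordLeq_ordLess_trans[OF card_of_mono1 X(1)]])
  have "infinite (preimage x) \<and> preimage x \<subseteq> W" if "x \<in> X" "x \<subseteq> f ` W" for x
  proof -
    have "f ` preimage x = x"
      using that(2) unfolding preimage_def by blast
    then have "infinite (preimage x)"
      using X(2) that(1) finite_imageI by metis
    then show ?thesis
      unfolding preimage_def by blast
  qed
  then have "\<forall>x'\<in>X'. infinite x' \<and> x' \<subseteq> W"
    unfolding X'_def by blast
  then obtain y where y: "y \<subseteq> W" "|y| =o |W|" "\<forall>x'\<in>X'. \<not> x' \<subseteq> y"
    using MA_Fn_large_avoiding_subset[OF MA W small] by blast
  have "|y| =o |f ` y|"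
    by (rule card_of_ordIso[THEN iffD1])
      (rule exI, rule inj_on_imp_bij_betw[OF inj_on_subset[OF f y(1)]])
  then have "|f ` y| =o |W|"
    by (rule ordIso_transitive[OF ordIso_symmetric y(2)])
  moreover have "\<not> x \<subseteq> f ` y" if "x \<in> X" for x
  proof
    assume "x \<subseteq> f ` y"
    then have "x \<in> {x \<in> X. x \<subseteq> f ` W}"
      using that y(1) by blast
    then have "preimage x \<in> X'"
      unfolding X'_def by (rule imageI)
    then have "\<not> preimage x \<subseteq> y"
      using y(3) by blast
    then obtain b where "b \<in> W" "f b \<in> x" "b \<notin> y"
      unfolding preimage_def by blast
    moreover obtain b' where "b' \<in> y" "f b = f b'"
      using \<open>f b \<in> x\<close> \<open>x \<subseteq> f ` y\<close> by blast
    ultimately show False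
      using inj_onD[OF f] y(1) by blast
  qed
  moreover have "f ` y \<subseteq> f ` W"
    using y(1) by blast
  ultimately show ?thesis
    by blast
qed

lemma MA_Fn_aleph1_avoiding_subset:
  fixes W :: "'w set" and f :: "'w \<Rightarrow> 'a" and X :: "'a set set"
  assumes MA: "MA_for (Fn W) Fn_le" and W: "|W| =o aleph1"
    and f: "inj_on f W" and X: "|X| <o continuum" "\<forall>x\<in>X. infinite x"
  shows "\<exists>y\<subseteq>f ` W. |y| =o aleph1 \<and> (\<forall>x\<in>X. \<not> x \<subseteq> y)"
proof (cases "aleph1 <o continuum")
  case True
  have "infinite W"
    using infinite_if_aleph1_ordLeq[OF ordIso_imp_ordLeq[OF ordIso_symmetric[OF W]]] .
  then obtain y where y: "y \<subseteq> f ` W" "|y| =o |W|" "\<forall>x\<in>X. \<not> x \<subseteq> y"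
    using MA_Fn_avoiding_subset[OF MA _ ordIso_ordLess_trans[OF W True] f X] by auto
  then show ?thesis
    using ordIso_transitive[OF y(2) W] by blast
next
  case False
  have "Well_order aleph1"
    using card_order_on_well_order_on[OF cardSuc_Card_order[OF natLeq_Card_order]] .
  then have "continuum \<le>o aleph1"
    using False by (simp add: not_ordLess_iff_ordLeq[OF card_of_Well_order])
  have "|W| =o |f ` W|"
    by (rule card_of_ordIso[THEN iffD1]) (rule exI, rule inj_on_imp_bij_betw[OF f])
  then have fW: "|f ` W| =o aleph1"
    by (rule ordIso_transitive[OF ordIso_symmetric W])
  have small: "|X| <o |f ` W|"
    using ordLess_ordLeq_trans[OF X(1) ordLeq_ordIso_trans[OF \<open>continuum \<le>o aleph1\<close>
          ordIso_symmetric[OF fW]]] .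
  have "infinite (f ` W)"
    using infinite_if_aleph1_ordLeq[OF ordIso_imp_ordLeq[OF ordIso_symmetric[OF fW]]] .
  moreover have "\<forall>x\<in>X. x \<noteq> {}"
    using X(2) by auto
  ultimately obtain y where y: "y \<subseteq> f ` W" "|y| =o |f ` W|" "\<forall>x\<in>X. \<not> x \<subseteq> y"
    using avoiding_subset_of_small_family[OF _ small] by blast
  then show ?thesis
    using ordIso_transitive[OF y(2) fW] by blast
qed

lemma continuum_ordLeq_aleph1_catching_family:
  fixes W :: "'w set" and K :: "'a set"
  assumes MA: "MA_for (Fn W) Fn_le" and W: "|W| =o aleph1" and K: "aleph1 \<le>o |K|"
    and X: "X \<subseteq> ctbl_subsets K"
    and catches: "\<forall>y. y \<subseteq> K \<and> |y| =o aleph1 \<longrightarrow> (\<exists>x\<in>X. x \<subseteq> y)"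
  shows "continuum \<le>o |X|"
proof (rule ccontr)
  assume "\<not> continuum \<le>o |X|"
  then have small: "|X| <o continuum"
    by (simp add: not_ordLeq_iff_ordLess[OF card_of_Well_order card_of_Well_order])
  have "\<forall>x\<in>X. infinite x"
    using X by (auto simp: ctbl_subsets_iff)
  moreover obtain f where f: "inj_on f W" "f ` W \<subseteq> K"
    using ordIso_ordLeq_trans[OF W K] unfolding card_of_ordLeq[symmetric] by blast
  ultimately obtain y where y: "y \<subseteq> f ` W" "|y| =o aleph1" "\<forall>x\<in>X. \<not> x \<subseteq> y"
    using MA_Fn_aleph1_avoiding_subset[OF MA W f(1) small] by blast
  have "y \<subseteq> K"
    using y(1) f(2) by (rule subset_trans)
  then show False
    using catches[rule_format, OF conjI[OF _ y(2)]] y(3) by blast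
qed

lemma uncountable_contains_ctbl_subset:
  assumes "aleph1 \<le>o r" and "y \<subseteq> K" "|y| =o r"
  shows "\<exists>x\<in>ctbl_subsets K. x \<subseteq> y"
proof -
  have "aleph1 \<le>o |y|"
    using ordLeq_ordIso_trans[OF assms(1) ordIso_symmetric[OF assms(3)]] .
  then show ?thesis
    using infinite_contains_ctbl_subset[OF infinite_if_aleph1_ordLeq assms(2)] by blast
qed

lemma stick_family_ctbl_subsets: "stick_family W (ctbl_subsets W)"
  unfolding stick_family_def
proof (intro conjI allI impI)
  fix y assume "y \<subseteq> W \<and> |y| =o aleph1"
  then show "\<exists>x\<in>ctbl_subsets W. x \<subseteq> y"
    using uncountable_contains_ctbl_subset[OF ordLeq_refl[OF cardSuc_Card_order[OF natLeq_Card_order]]]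
    by blast
qed simp

lemma stick'_prop_Pow_nat: "stick'_prop (UNIV :: nat set set)"
  unfolding stick'_prop_def
proof (intro conjI exI[of _ "ctbl_subsets UNIV"] allI impI)
  fix y :: "nat set set" assume "y \<subseteq> UNIV \<and> |y| =o aleph1"
  then show "\<exists>x\<in>ctbl_subsets UNIV. x \<subseteq> y"
    using uncountable_contains_ctbl_subset[OF ordLeq_refl[OF cardSuc_Card_order[OF natLeq_Card_order]]]
    by blast
qed (simp_all add: aleph1_ordLeq_continuum card_of_ordIso_ctbl_subsets_Pow_nat)

lemma stick''_prop_Pow_nat: "stick''_prop (UNIV :: nat set set)"
  unfolding stick''_prop_def
proof (intro conjI exI[of _ "ctbl_subsets UNIV"] allI impI)
  fix y :: "nat set set" assume "y \<subseteq> UNIV \<and> |y| =o |UNIV :: nat set set|"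
  then show "\<exists>x\<in>ctbl_subsets UNIV. x \<subseteq> y"
    using uncountable_contains_ctbl_subset[OF aleph1_ordLeq_continuum] by blast
qed (simp_all add: aleph1_ordLeq_continuum card_of_ordIso_ctbl_subsets_Pow_nat)

lemma continuum_ordLeq_stick_family:
  assumes "MA_for (Fn W) Fn_le" "|W| =o aleph1" "stick_family W X"
  shows "continuum \<le>o |X|"
  using continuum_ordLeq_aleph1_catching_family[OF assms(1,2)
      ordIso_imp_ordLeq[OF ordIso_symmetric[OF assms(2)]]] assms(3)
  unfolding stick_family_def by blast

lemma card_of_ctbl_subsets_ordIso_continuum:
  assumes "MA_for (Fn W) Fn_le" "|W| =o aleph1"
  shows "|ctbl_subsets W| =o continuum"
  unfolding ordIso_iff_ordLeq
  using card_of_ctbl_subsets_ordLeq_continuum[OF ordIso_ordLeq_trans[OF assms(2) aleph1_ordLeq_continuum]]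
    continuum_ordLeq_stick_family[OF assms stick_family_ctbl_subsets] by blast

lemma continuum_ordLeq_stick'_prop:
  assumes MA: "MA_for (Fn W) Fn_le" and W: "|W| =o aleph1" and "stick'_prop K"
  shows "continuum \<le>o |K|"
proof -
  obtain X where X: "X \<subseteq> ctbl_subsets K" "|X| =o |K|"
    "\<forall>y. y \<subseteq> K \<and> |y| =o aleph1 \<longrightarrow> (\<exists>x\<in>X. x \<subseteq> y)" and "aleph1 \<le>o |K|"
    using assms(3) unfolding stick'_prop_def by blast
  show ?thesis
    using continuum_ordLeq_aleph1_catching_family[OF MA W \<open>aleph1 \<le>o |K|\<close> X(1,3)]
    by (rule ordLeq_ordIso_trans[OF _ X(2)])
qed

lemma continuum_ordLeq_stick''_prop:
  assumes MA: "MA_for (Fn K) Fn_le" and "stick''_prop K"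
  shows "continuum \<le>o |K|"
proof (rule ccontr)
  obtain X where X: "X \<subseteq> ctbl_subsets K" "|X| =o |K|"
    and catches: "\<forall>y. y \<subseteq> K \<and> |y| =o |K| \<longrightarrow> (\<exists>x\<in>X. x \<subseteq> y)" and "aleph1 \<le>o |K|"
    using assms(2) unfolding stick''_prop_def by blast
  assume "\<not> continuum \<le>o |K|"
  then have small: "|K| <o continuum"
    by (simp add: not_ordLeq_iff_ordLess[OF card_of_Well_order card_of_Well_order])
  have "\<forall>x\<in>X. infinite x"
    using X(1) by (auto simp: ctbl_subsets_iff)
  then obtain y where y: "y \<subseteq> K" "|y| =o |K|" "\<forall>x\<in>X. \<not> x \<subseteq> y"
    using MA_Fn_avoiding_subset[OF MA infinite_if_aleph1_ordLeq[OF \<open>aleph1 \<le>o |K|\<close>] small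
        inj_on_id ordIso_ordLess_trans[OF X(2) small]]
    by auto
  then show False
    using catches[rule_format, OF conjI[OF y(1,2)]] by blast
qed

theorem fact1p3:
  fixes W :: "'w set"
  assumes "(card_of W, aleph1) \<in> ordIso"
  shows
    "(MA_for (Fn W) Fn_le \<longrightarrow>
        ((\<exists>X. stick_family W X \<and> (card_of X, continuum) \<in> ordIso) \<and>
         (\<forall>X. stick_family W X \<longrightarrow> (continuum, card_of X) \<in> ordLeq)) \<and>
        (stick'_prop (UNIV :: nat set set) \<and>
         (\<forall>K :: 'k set. stick'_prop K \<longrightarrow> (continuum, card_of K) \<in> ordLeq)))
     \<and>
     ((\<forall>K :: 'c set. MA_for (Fn K) Fn_le) \<longrightarrow>
        stick''_prop (UNIV :: nat set set) \<and>
        (\<forall>K :: 'c set. stick''_prop K \<longrightarrow> (continuum, card_of K) \<in> ordLeq))"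
proof (intro conjI impI allI)
  show "\<exists>X. stick_family W X \<and> |X| =o continuum" if "MA_for (Fn W) Fn_le"
    using stick_family_ctbl_subsets card_of_ctbl_subsets_ordIso_continuum[OF that assms] by blast
  show "continuum \<le>o |X|" if "MA_for (Fn W) Fn_le" "stick_family W X" for X
    using continuum_ordLeq_stick_family[OF that(1) assms that(2)] .
  show "stick'_prop (UNIV :: nat set set)" "stick''_prop (UNIV :: nat set set)"
    by (rule stick'_prop_Pow_nat, rule stick''_prop_Pow_nat)
  show "continuum \<le>o |K|" if "MA_for (Fn W) Fn_le" "stick'_prop K" for K :: "'k set"
    using continuum_ordLeq_stick'_prop[OF that(1) assms that(2)] .
  show "continuum \<le>o |K|" if "\<forall>K :: 'c set. MA_for (Fn K) Fn_le" "stick''_prop K"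
    for K :: "'c set"
    using continuum_ordLeq_stick''_prop[OF spec[OF that(1)] that(2)] .
qed

end
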